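(* Let $r,s,t$ be nonzero reals with $r+s+t=0$ and $\lambda=(\lambda_k)_{k\ge0}$ a strictly increasing sequence of positive reals with $\lambda_k\to\infty$. For $x\in\omega$ let $\widehat W_n(x)=\frac{1}{\lambda_n}\sum_{k=0}^n(\lambda_k-\lambda_{k-1})(rx_k+sx_{k-1}+tx_{k-2})$ and $c_0^\lambda(\widehat B)=\{x\in\omega:\lim_{n\to\infty}\widehat W_n(x)=0\}$. Then $c\subsetneq c_0^\lambda(\widehat B)$.
   Context: $\omega$: all complex sequences indexed by $\mathbb{N}=\{0,1,\dots\}$; $c$: convergent sequences. Convention: terms with negative subscript are $0$ ($x_{-1}=x_{-2}=0$, $\lambda_{-1}=0$). *)

theory Defs
  imports "HOL-Analysis.Analysis"
begin

definition ext0 :: "(nat \<Rightarrow> 'a::zero) \<Rightarrow> int \<Rightarrow> 'a" where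
  "ext0 x i = (if i < 0 then 0 else x (nat i))"

definition c_seq :: "(nat \<Rightarrow> complex) set" where
  "c_seq = {x. convergent x}"

definition W_hat :: "real \<Rightarrow> real \<Rightarrow> real \<Rightarrow> (nat \<Rightarrow> real) \<Rightarrow> nat \<Rightarrow> (nat \<Rightarrow> complex) \<Rightarrow> complex" where
  "W_hat r s t lam n x =
     complex_of_real (1 / lam n) *
     (\<Sum>k=0..n. complex_of_real (ext0 lam (int k) - ext0 lam (int k - 1)) *
        (complex_of_real r * ext0 x (int k) + complex_of_real s * ext0 x (int k - 1)
         + complex_of_real t * ext0 x (int k - 2)))"

definition c0_lambda_B :: "real \<Rightarrow> real \<Rightarrow> real \<Rightarrow> (nat \<Rightarrow> real) \<Rightarrow> (nat \<Rightarrow> complex) set" where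
  "c0_lambda_B r s t lam = {x. (\<lambda>n. W_hat r s t lam n x) \<longlonglongrightarrow> 0}"

end

theory Submission
  imports Defs "HOL-Real_Asymp.Real_Asymp"
begin

text \<open>
  \<open>W_hat\<close> is a weighted mean, with weights \<open>\<lambda>\<^sub>k - \<lambda>\<^sub>k\<^sub>-\<^sub>1 \<ge> 0\<close> summing to \<open>\<lambda>\<^sub>n \<rightarrow> \<infinity>\<close>,
  of the sequence \<open>r x\<^sub>k + s x\<^sub>k\<^sub>-\<^sub>1 + t x\<^sub>k\<^sub>-\<^sub>2\<close>; by the Toeplitz argument it tends to 0
  as soon as that sequence does. For convergent \<open>x\<close> this sequence tends to
  \<open>(r + s + t) lim x = 0\<close>, which gives the inclusion. It is strict because
  \<open>x\<^sub>k = ln (k + 1)\<close> diverges while its increments, and hence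
  \<open>r (x\<^sub>k - x\<^sub>k\<^sub>-\<^sub>1) - t (x\<^sub>k\<^sub>-\<^sub>1 - x\<^sub>k\<^sub>-\<^sub>2)\<close>, tend to 0.
\<close>

lemma ext0_of_nat [simp]: "ext0 x (int k) = x k"
  by (simp add: ext0_def)

lemma sum_ext0_diff:
  fixes f :: "nat \<Rightarrow> 'a::ab_group_add"
  shows "(\<Sum>k\<le>n. ext0 f (int k) - ext0 f (int k - 1)) = f n"
  by (induction n) (simp_all add: ext0_def)

lemma ext0_diff_nonneg:
  fixes f :: "nat \<Rightarrow> real"
  assumes "mono f" and "f 0 \<ge> 0"
  shows "ext0 f (int k) - ext0 f (int k - 1) \<ge> 0"
  using assms by (cases k) (simp_all add: ext0_def mono_def)

lemma weighted_mean_tendsto_zero: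
  fixes w :: "nat \<Rightarrow> real" and y :: "nat \<Rightarrow> 'a::real_normed_vector"
  assumes w: "\<And>k. w k \<ge> 0"
    and S: "filterlim (\<lambda>n. \<Sum>k\<le>n. w k) at_top sequentially"
    and y: "y \<longlonglongrightarrow> 0"
  shows "(\<lambda>n. (1 / (\<Sum>k\<le>n. w k)) *\<^sub>R (\<Sum>k\<le>n. w k *\<^sub>R y k)) \<longlonglongrightarrow> 0"
proof (rule LIMSEQ_I)
  fix e :: real
  assume e: "e > 0"
  obtain M where M: "\<And>k. k \<ge> M \<Longrightarrow> norm (y k) < e / 2"
    using LIMSEQ_D[OF y, of "e / 2"] e by auto
  define C where "C = (\<Sum>k<M. w k * norm (y k))"
  have "C \<ge> 0"
    unfolding C_def using w by (simp add: sum_nonneg)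
  obtain N where N: "\<And>n. n \<ge> N \<Longrightarrow> (\<Sum>k\<le>n. w k) > max 0 (2 * C / e)"
    using S filterlim_at_top_dense eventually_sequentially by metis
  have "norm ((1 / (\<Sum>k\<le>n. w k)) *\<^sub>R (\<Sum>k\<le>n. w k *\<^sub>R y k) - 0) < e" if "n \<ge> N" for n
  proof -
    define S where "S = (\<Sum>k\<le>n. w k)"
    have "S > 0" "2 * C < e * S"
      using N[OF that] e by (auto simp: S_def field_simps)
    have tail: "w k * norm (y k) \<le> (if k < M then w k * norm (y k) else 0) + e / 2 * w k" for k
    proof (cases "k < M")
      case False
      then have "w k * norm (y k) \<le> w k * (e / 2)"
        using M[of k] w[of k] by (intro mult_left_mono) simp_all
      then show ?thesis
        using False by (simp add: mult.commute)
    qed (use w[of k] e in simp)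
    have "norm (\<Sum>k\<le>n. w k *\<^sub>R y k) \<le> (\<Sum>k\<le>n. w k * norm (y k))"
      using norm_sum[of "\<lambda>k. w k *\<^sub>R y k"] w by simp
    also have "\<dots> \<le> (\<Sum>k\<le>n. (if k < M then w k * norm (y k) else 0) + e / 2 * w k)"
      by (intro sum_mono tail)
    also have "\<dots> = (\<Sum>k\<le>n. (if k < M then w k * norm (y k) else 0)) + e / 2 * S"
      by (simp add: sum.distrib sum_distrib_left S_def)
    also have "(\<Sum>k\<le>n. (if k < M then w k * norm (y k) else 0))
        = (\<Sum>k \<in> {..n} \<inter> {..<M}. w k * norm (y k))"
      by (simp add: sum.inter_restrict)
    also have "\<dots> \<le> C"
      unfolding C_def by (rule sum_mono2) (use w in auto)
    finally have "norm (\<Sum>k\<le>n. w k *\<^sub>R y k) < e * S"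
      using \<open>2 * C < e * S\<close> by simp
    then show ?thesis
      using \<open>S > 0\<close> by (simp add: S_def[symmetric] field_simps)
  qed
  then show "\<exists>N. \<forall>n\<ge>N. norm ((1 / (\<Sum>k\<le>n. w k)) *\<^sub>R (\<Sum>k\<le>n. w k *\<^sub>R y k) - 0) < e"
    by blast
qed

lemma W_hat_tendsto_zero:
  fixes lam :: "nat \<Rightarrow> real" and x :: "nat \<Rightarrow> complex"
  assumes "mono lam" and "lam 0 \<ge> 0" and "filterlim lam at_top sequentially"
    and "(\<lambda>k. of_real r * x (k + 2) + of_real s * x (k + 1) + of_real t * x k) \<longlonglongrightarrow> 0"
  shows "(\<lambda>n. W_hat r s t lam n x) \<longlonglongrightarrow> 0"
proof -
  define y where "y k = of_real r * ext0 x (int k) + of_real s * ext0 x (int k - 1)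
    + of_real t * ext0 x (int k - 2)" for k
  define w where "w k = ext0 lam (int k) - ext0 lam (int k - 1)" for k
  have "(\<lambda>k. y (k + 2)) \<longlonglongrightarrow> 0"
    using assms(4) by (simp add: y_def ext0_def nat_add_distrib algebra_simps)
  then have "y \<longlonglongrightarrow> 0"
    by (rule LIMSEQ_offset)
  moreover have "(\<Sum>k\<le>n. w k) = lam n" for n
    unfolding w_def by (rule sum_ext0_diff)
  ultimately have "(\<lambda>n. (1 / lam n) *\<^sub>R (\<Sum>k\<le>n. w k *\<^sub>R y k)) \<longlonglongrightarrow> 0"
    using weighted_mean_tendsto_zero[of w y] ext0_diff_nonneg[OF assms(1,2)] assms(3)
    by (simp add: w_def)
  then show ?thesis
    by (simp add: W_hat_def y_def w_def scaleR_conv_of_real atLeast0AtMost)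
qed

lemma convergent_in_c0_lambda_B:
  fixes lam :: "nat \<Rightarrow> real" and x :: "nat \<Rightarrow> complex"
  assumes "r + s + t = 0" and "mono lam" and "lam 0 \<ge> 0"
    and "filterlim lam at_top sequentially" and "convergent x"
  shows "x \<in> c0_lambda_B r s t lam"
proof -
  obtain L where L: "x \<longlonglongrightarrow> L"
    using \<open>convergent x\<close> by (auto simp: convergent_def)
  have "(\<lambda>k. of_real r * x (k + 2) + of_real s * x (k + 1) + of_real t * x k)
      \<longlonglongrightarrow> of_real (r + s + t) * L"
    unfolding of_real_add distrib_right
    by (intro tendsto_intros L LIMSEQ_ignore_initial_segment)
  then show ?thesis
    using W_hat_tendsto_zero[OF assms(2-4)] assms(1) by (simp add: c0_lambda_B_def)
qed

lemma ln_in_c0_lambda_B: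
  fixes lam :: "nat \<Rightarrow> real"
  assumes "r + s + t = 0" and "mono lam" and "lam 0 \<ge> 0"
    and "filterlim lam at_top sequentially"
  shows "(\<lambda>k. complex_of_real (ln (real k + 1))) \<in> c0_lambda_B r s t lam"
proof -
  define d where "d k = r * ln (real k + 3) + s * ln (real k + 2) + t * ln (real k + 1)" for k
  have "d k - (r * (ln (real k + 3) - ln (real k + 2)) + t * (ln (real k + 1) - ln (real k + 2)))
      = (r + s + t) * ln (real k + 2)" for k
    by (simp add: d_def algebra_simps)
  then have "d = (\<lambda>k. r * (ln (real k + 3) - ln (real k + 2)) + t * (ln (real k + 1) - ln (real k + 2)))"
    using assms(1) by fastforce
  moreover have "(\<lambda>k. ln (real k + 3) - ln (real k + 2)) \<longlonglongrightarrow> 0"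
    and "(\<lambda>k. ln (real k + 1) - ln (real k + 2)) \<longlonglongrightarrow> 0"
    by real_asymp+
  ultimately have "d \<longlonglongrightarrow> r * 0 + t * 0"
    by (simp only:) (intro tendsto_intros)
  then have "(\<lambda>k. complex_of_real (d k)) \<longlonglongrightarrow> 0"
    using tendsto_of_real by fastforce
  then show ?thesis
    using W_hat_tendsto_zero[OF assms(2-4), where x = "\<lambda>k. of_real (ln (real k + 1))"]
    by (simp add: c0_lambda_B_def d_def add.commute)
qed

lemma ln_not_convergent: "\<not> convergent (\<lambda>k. complex_of_real (ln (real k + 1)))"
proof
  assume "convergent (\<lambda>k. complex_of_real (ln (real k + 1)))"
  then obtain L where "(\<lambda>k. complex_of_real (ln (real k + 1))) \<longlonglongrightarrow> L"
    by (auto simp: convergent_def)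
  from tendsto_Re[OF this] have "(\<lambda>k. ln (real k + 1)) \<longlonglongrightarrow> Re L"
    by simp
  moreover have "filterlim (\<lambda>k. ln (real k + 1)) at_top sequentially"
    by real_asymp
  ultimately show False
    using filterlim_at_top_imp_at_infinity not_tendsto_and_filterlim_at_infinity by fastforce
qed

theorem theorem5:
  fixes r s t :: real and lam :: "nat \<Rightarrow> real"
  assumes "r \<noteq> 0" and "s \<noteq> 0" and "t \<noteq> 0" and "r + s + t = 0"
    and "strict_mono lam" and "\<And>k. lam k > 0"
    and "filterlim lam at_top sequentially"
  shows "c_seq \<subset> c0_lambda_B r s t lam"
proof -
  have lam: "mono lam" "lam 0 \<ge> 0"
    using assms(5,6) strict_mono_mono less_imp_le by auto
  have "c_seq \<subseteq> c0_lambda_B r s t lam"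
    using convergent_in_c0_lambda_B[OF assms(4) lam assms(7)] by (auto simp: c_seq_def)
  moreover have "(\<lambda>k. complex_of_real (ln (real k + 1))) \<in> c0_lambda_B r s t lam - c_seq"
    using ln_in_c0_lambda_B[OF assms(4) lam assms(7)] ln_not_convergent by (simp add: c_seq_def)
  ultimately show ?thesis
    by blast
qed

end
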